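(* Let $G$ be a finite abstract simplicial complex with connection matrix $L$. Let $p(G)$ and $n(G)$ be the number of positive and negative eigenvalues of $L$ (counted with multiplicity), and let $b(G)$ and $f(G)$ be the number of even-dimensional and odd-dimensional simplices of $G$, respectively. Then $b(G)=p(G)$ and $f(G)=n(G)$. Consequently $\chi(G)=p(G)-n(G)$.
   Context: A finite abstract simplicial complex $G$ is a finite set of non-empty finite sets closed under taking non-empty subsets; its elements are simplices, and $\dim(x)=|x|-1$. The connection matrix $L$ of $G$ is the symmetric matrix indexed by simplices with $L(x,y)=1$ if $x\cap y\neq\emptyset$ and $0$ otherwise. The Euler characteristic is $\chi(G)=\sum_{x\in G}(-1)^{\dim(x)}$. *)

theory Defs
  imports "Jordan_Normal_Form.Char_Poly"
begin

definition simplicial_complex :: "'a set set \<Rightarrow> bool" where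
  "simplicial_complex G \<longleftrightarrow> finite G \<and>
     (\<forall>x\<in>G. finite x \<and> x \<noteq> {}) \<and>
     (\<forall>x\<in>G. \<forall>y. y \<subseteq> x \<and> y \<noteq> {} \<longrightarrow> y \<in> G)"

definition sdim :: "'a set \<Rightarrow> nat" where
  "sdim x = card x - 1"

definition simplex_list :: "'a set set \<Rightarrow> 'a set list" where
  "simplex_list G = (SOME xs. distinct xs \<and> set xs = G)"

definition connection_matrix :: "'a set set \<Rightarrow> real mat" where
  "connection_matrix G = (let xs = simplex_list G in
     mat (length xs) (length xs)
       (\<lambda>(i,j). if xs ! i \<inter> xs ! j \<noteq> {} then 1 else 0))"

definition pos_eigs :: "real mat \<Rightarrow> nat" where
  "pos_eigs A = (\<Sum>c\<in>{c. eigenvalue A c \<and> c > 0}. order c (char_poly A))"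

definition neg_eigs :: "real mat \<Rightarrow> nat" where
  "neg_eigs A = (\<Sum>c\<in>{c. eigenvalue A c \<and> c < 0}. order c (char_poly A))"

definition euler_char :: "'a set set \<Rightarrow> int" where
  "euler_char G = (\<Sum>x\<in>G. (-1) ^ sdim x)"

end

theory Submission
  imports Defs "Jordan_Normal_Form.Schur_Decomposition"
begin

(* Let W be the matrix with W(x,y) = 1 if x is a face of y and 0 otherwise, and let S be
   the diagonal matrix with entries (-1)^dim x. Then L = W^T S W: the (x,y) entry of the right
   side is the sum of (-1)^dim z over the nonempty faces z of x \<inter> y, which is 1 if x \<inter> y is
   nonempty (the Euler characteristic of a simplex) and 0 otherwise. W is invertible, being
   unitriangular once the simplices are ordered by dimension. Hence L is congruent to S, and by
   Sylvester's law of inertia, proved below via the spectral theorem, L has as many positive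
   (negative) eigenvalues as S has positive (negative) diagonal entries, that is, as G has
   even- (odd-) dimensional simplices. *)

section \<open>Diagonal matrices and congruence\<close>

lemma diag_mat_mat_diag [simp]: "diag_mat (mat_diag n f) = map f [0..<n]"
  by (simp add: diag_mat_def mat_diag_def)

lemma upper_triangular_mat_diag: "upper_triangular (mat_diag n f)"
  by (simp add: upper_triangular_def mat_diag_def)

lemma transpose_mat_diag [simp]: "transpose_mat (mat_diag n f) = mat_diag n f"
  by (auto simp: mat_diag_def intro!: eq_matI)

lemma det_mat_diag: "det (mat_diag n f) = prod_list (map f [0..<n])"
  by (simp add: det_upper_triangular[OF upper_triangular_mat_diag mat_diag_dim])

lemma mat_diag_mult_vec:
  assumes "v \<in> carrier_vec n"
  shows "mat_diag n d *\<^sub>v v = vec n (\<lambda>i. d i * v $ i)"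
proof (rule eq_vecI)
  fix i assume "i < dim_vec (vec n (\<lambda>i. d i * v $ i))"
  then show "(mat_diag n d *\<^sub>v v) $ i = vec n (\<lambda>i. d i * v $ i) $ i"
    using assms by (auto simp: mat_diag_def scalar_prod_def sum.remove[of _ i])
qed (simp add: mat_diag_def)

lemma quadratic_form_mat_diag:
  fixes c :: "'a :: comm_ring_1 vec"
  assumes "c \<in> carrier_vec n"
  shows "c \<bullet> (mat_diag n d *\<^sub>v c) = (\<Sum>i<n. d i * (c $ i)\<^sup>2)"
  using assms
  by (auto simp: mat_diag_mult_vec scalar_prod_def lessThan_atLeast0 power2_eq_square ac_simps)

lemma symmetric_mat_index:
  assumes "A \<in> carrier_mat n n" "transpose_mat A = A" "i < n" "j < n"
  shows "A $$ (i, j) = A $$ (j, i)"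
  by (metis assms index_transpose_mat(1) carrier_matD)

lemma index_congruence_mat:
  fixes A Q :: "'a :: comm_ring_1 mat"
  assumes Q: "Q \<in> carrier_mat n k" and A: "A \<in> carrier_mat n n" and "i < k" "j < k"
  shows "(transpose_mat Q * A * Q) $$ (i, j) = col Q i \<bullet> (A *\<^sub>v col Q j)"
proof -
  have "transpose_mat Q * A * Q = transpose_mat Q * (A * Q)"
    using Q A by (intro assoc_mult_mat) auto
  then show ?thesis using assms by (simp add: col_mult2[OF A Q] mult_mat_vec_def)
qed

lemma index_congruence_mat_diag:
  fixes W :: "'a :: comm_ring_1 mat"
  assumes W: "W \<in> carrier_mat n n" and "i < n" "j < n"
  shows "(transpose_mat W * mat_diag n s * W) $$ (i, j) = (\<Sum>k<n. W $$ (k, i) * s k * W $$ (k, j))"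
proof -
  have "(transpose_mat W * mat_diag n s * W) $$ (i, j) = col W i \<bullet> (mat_diag n s *\<^sub>v col W j)"
    using assms by (intro index_congruence_mat) auto
  also have "mat_diag n s *\<^sub>v col W j = vec n (\<lambda>k. s k * W $$ (k, j))"
    using assms by (auto simp: mat_diag_mult_vec intro!: eq_vecI)
  also have "col W i \<bullet> vec n (\<lambda>k. s k * W $$ (k, j)) = (\<Sum>k<n. W $$ (k, i) * s k * W $$ (k, j))"
    using assms by (auto simp: scalar_prod_def lessThan_atLeast0 intro!: sum.cong)
  finally show ?thesis .
qed

lemma congruence_transpose_mult:
  fixes A P R :: "'a :: comm_ring_1 mat"
  assumes "A \<in> carrier_mat n n" "P \<in> carrier_mat n n" "R \<in> carrier_mat n n"
  shows "transpose_mat (P * R) * A * (P * R) = transpose_mat R * (transpose_mat P * A * P) * R"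
  using assms by (simp add: transpose_mult assoc_mult_mat[of _ n n _ n _ n])

lemma symmetric_congruence_mat:
  fixes A Q :: "'a :: comm_ring_1 mat"
  assumes "A \<in> carrier_mat n n" "Q \<in> carrier_mat n n" "transpose_mat A = A"
  shows "transpose_mat (transpose_mat Q * A * Q) = transpose_mat Q * A * Q"
proof -
  have "transpose_mat (transpose_mat Q * A * Q) = transpose_mat Q * transpose_mat (transpose_mat Q * A)"
    using assms by (intro transpose_mult) auto
  also have "transpose_mat (transpose_mat Q * A) = A * Q"
    using assms transpose_mult[of "transpose_mat Q" n n A n] by simp
  finally show ?thesis
    using assms by (simp add: assoc_mult_mat[of _ n n _ n _ n])
qed

lemma quadratic_form_congruence:
  fixes M A :: "'a :: comm_ring_1 mat"
  assumes M: "M \<in> carrier_mat n n" and A: "A \<in> carrier_mat n n" and c: "c \<in> carrier_vec n"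
  shows "c \<bullet> ((transpose_mat M * A * M) *\<^sub>v c) = (M *\<^sub>v c) \<bullet> (A *\<^sub>v (M *\<^sub>v c))"
proof -
  have "(transpose_mat M * A * M) *\<^sub>v c = transpose_mat M *\<^sub>v (A *\<^sub>v (M *\<^sub>v c))"
    using M A c by (simp add: assoc_mult_mat_vec[of _ n n _ n])
  moreover have "c \<bullet> (transpose_mat M *\<^sub>v w) = (M *\<^sub>v c) \<bullet> w" if "w \<in> carrier_vec n" for w
    using transpose_vec_mult_scalar[of "transpose_mat M" n n w c] M c that
    by (simp add: comm_scalar_prod[of _ n])
  ultimately show ?thesis using M A c by simp
qed

lemma det_orthogonal_mat_nonzero:
  fixes Q :: "'a :: idom mat"
  assumes "Q \<in> carrier_mat n n" "transpose_mat Q * Q = 1\<^sub>m n"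
  shows "det Q \<noteq> 0"
proof -
  have "det (transpose_mat Q) * det Q = 1"
    using assms det_mult[of "transpose_mat Q" n Q] by simp
  then show ?thesis by auto
qed

section \<open>The spectral theorem for real symmetric matrices\<close>

lemma eigenvalue_of_real_symmetric_mat_is_real:
  fixes A :: "real mat"
  assumes A: "A \<in> carrier_mat n n" and sym: "transpose_mat A = A"
    and ev: "eigenvalue (map_mat complex_of_real A) c"
  shows "cnj c = c"
proof -
  obtain v where v: "v \<in> carrier_vec n" "v \<noteq> 0\<^sub>v n"
    and Av: "map_mat complex_of_real A *\<^sub>v v = c \<cdot>\<^sub>v v"
    using ev A unfolding eigenvalue_def eigenvector_def by auto
  have Av_index: "(\<Sum>j<n. of_real (A $$ (i, j)) * v $ j) = c * v $ i" if "i < n" for i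
    using arg_cong[OF Av, of "\<lambda>w. w $ i"] that A v
    by (auto simp: mult_mat_vec_def scalar_prod_def lessThan_atLeast0 ac_simps)
  define q where "q = (\<Sum>i<n. \<Sum>j<n. cnj (v $ i) * of_real (A $$ (i, j)) * v $ j)"
  define N where "N = (\<Sum>i<n. cnj (v $ i) * v $ i)"
  have "q = (\<Sum>i<n. cnj (v $ i) * (\<Sum>j<n. of_real (A $$ (i, j)) * v $ j))"
    by (simp add: q_def sum_distrib_left mult.assoc)
  also have "\<dots> = (\<Sum>i<n. cnj (v $ i) * (c * v $ i))"
    by (intro sum.cong refl) (simp add: Av_index)
  also have "\<dots> = c * N"
    by (simp add: N_def sum_distrib_left ac_simps)
  finally have q: "q = c * N" .
  have "cnj q = (\<Sum>i<n. \<Sum>j<n. v $ i * of_real (A $$ (i, j)) * cnj (v $ j))"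
    by (simp add: q_def)
  also have "\<dots> = (\<Sum>j<n. \<Sum>i<n. v $ i * of_real (A $$ (i, j)) * cnj (v $ j))"
    by (rule sum.swap)
  also have "\<dots> = q"
    unfolding q_def by (intro sum.cong refl) (simp add: symmetric_mat_index[OF A sym] ac_simps)
  finally have "cnj q = q" .
  obtain i where i: "i < n" "v $ i \<noteq> 0"
    using v by (metis eq_vecI carrier_vecD index_zero_vec)
  define r where "r = (\<Sum>i<n. (cmod (v $ i))\<^sup>2)"
  have "N = of_real r"
    unfolding N_def r_def of_real_sum
    by (intro sum.cong refl) (metis complex_norm_square mult.commute)
  moreover have "r > 0"
    unfolding r_def using i by (intro sum_pos2[of _ i]) auto
  ultimately have "N \<noteq> 0" "cnj N = N" by auto
  with \<open>cnj q = q\<close> q show "cnj c = c" by simp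
qed

lemma real_symmetric_mat_has_eigenvalue:
  fixes A :: "real mat"
  assumes A: "A \<in> carrier_mat n n" and "n > 0" and sym: "transpose_mat A = A"
  obtains e where "eigenvalue A e"
proof -
  let ?B = "map_mat complex_of_real A"
  have B: "?B \<in> carrier_mat n n" using A by simp
  have "degree (char_poly ?B) = n" using degree_monic_char_poly[OF B] by simp
  then obtain c where "poly (char_poly ?B) c = 0"
    using fundamental_theorem_of_algebra constant_degree \<open>n > 0\<close> by (metis neq0_conv)
  then have ev: "eigenvalue ?B c" using eigenvalue_root_char_poly[OF B] by simp
  have "c = of_real (Re c)"
    using eigenvalue_of_real_symmetric_mat_is_real[OF A sym ev] by (simp add: complex_eq_iff)
  with \<open>poly (char_poly ?B) c = 0\<close> have "poly (char_poly A) (Re c) = 0"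
    by (metis of_real_hom.char_poly_hom[OF A] of_real_hom.poly_map_poly of_real_eq_0_iff)
  then show thesis using that eigenvalue_root_char_poly[OF A] by blast
qed

lemma orthogonal_mat_with_first_col:
  fixes v :: "real vec"
  assumes v: "v \<in> carrier_vec n" and v0: "v \<noteq> 0\<^sub>v n"
  obtains Q where "Q \<in> carrier_mat n n" "transpose_mat Q * Q = 1\<^sub>m n"
    "col Q 0 = (1 / sqrt (v \<bullet> v)) \<cdot>\<^sub>v v"
proof -
  interpret cof_vec_space n "TYPE(real)" .
  define b where "b = basis_completion v"
  from basis_completion[OF v v0, folded b_def]
  have dist_b: "distinct b" and indep: "\<not> lin_dep (set b)" and b: "set b \<subseteq> carrier_vec n"
    and hdb: "hd b = v" and len_b: "length b = n" by auto
  have n: "n > 0" using v v0 by (cases n) auto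
  from hdb len_b n obtain vs where bv: "b = v # vs" by (cases b) auto
  define ws where "ws = gram_schmidt n b"
  from gram_schmidt_result[OF b dist_b indep refl, folded ws_def]
  have ws: "set ws \<subseteq> carrier_vec n" "corthogonal ws" "length ws = n" by (auto simp: len_b)
  from gram_schmidt_hd[OF v, of vs, folded bv] have hdws: "hd ws = v" unfolding ws_def .
  have wsi: "ws ! i \<in> carrier_vec n" if "i < n" for i using ws that by auto
  have orth: "ws ! i \<bullet> ws ! j = 0 \<longleftrightarrow> i \<noteq> j" if "i < n" "j < n" for i j
    using corthogonalD[OF ws(2)] ws(3) that by simp
  have pos: "ws ! i \<bullet> ws ! i > 0" if "i < n" for i
    using conjugate_square_ge_0_vec[of "ws ! i"] orth[OF that that] by simp
  define Q where "Q = mat_of_cols n (map (\<lambda>w. (1 / sqrt (w \<bullet> w)) \<cdot>\<^sub>v w) ws)"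
  have Q: "Q \<in> carrier_mat n n" unfolding Q_def using ws(3) by auto
  have colQ: "col Q i = (1 / sqrt (ws ! i \<bullet> ws ! i)) \<cdot>\<^sub>v ws ! i" if "i < n" for i
    unfolding Q_def using that ws(3) wsi[OF that] by (subst col_mat_of_cols) auto
  have "transpose_mat Q * Q = 1\<^sub>m n"
  proof (rule eq_matI)
    fix i j assume "i < dim_row (1\<^sub>m n)" "j < dim_col (1\<^sub>m n)"
    then have i: "i < n" and j: "j < n" by auto
    have "(transpose_mat Q * Q) $$ (i, j)
        = 1 / sqrt (ws ! i \<bullet> ws ! i) * (1 / sqrt (ws ! j \<bullet> ws ! j)) * (ws ! i \<bullet> ws ! j)"
      using Q i j wsi[OF i] wsi[OF j] by (simp add: colQ)
    also have "\<dots> = 1\<^sub>m n $$ (i, j)"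
      using orth[OF i j] pos[OF i] i j by (cases "i = j") (simp_all add: field_simps)
    finally show "(transpose_mat Q * Q) $$ (i, j) = 1\<^sub>m n $$ (i, j)" .
  qed (use Q in auto)
  moreover have "col Q 0 = (1 / sqrt (v \<bullet> v)) \<cdot>\<^sub>v v"
    using colQ[OF n] hdws ws(3) n by (cases ws) auto
  ultimately show thesis using that Q by blast
qed

lemma mult_four_block_mat_diag:
  assumes "A1 \<in> carrier_mat n1 n1" "A2 \<in> carrier_mat n2 n2"
    "B1 \<in> carrier_mat n1 n1" "B2 \<in> carrier_mat n2 n2"
  shows "four_block_mat A1 (0\<^sub>m n1 n2) (0\<^sub>m n2 n1) A2 * four_block_mat B1 (0\<^sub>m n1 n2) (0\<^sub>m n2 n1) B2
    = four_block_mat (A1 * B1) (0\<^sub>m n1 n2) (0\<^sub>m n2 n1) (A2 * B2)"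
  using assms by (subst mult_four_block_mat) auto

lemma orthogonal_congruence_deflates_eigenvector:
  fixes A Q :: "real mat"
  assumes A: "A \<in> carrier_mat (Suc m) (Suc m)" and sym: "transpose_mat A = A"
    and Q: "Q \<in> carrier_mat (Suc m) (Suc m)" and orth: "transpose_mat Q * Q = 1\<^sub>m (Suc m)"
    and eigen: "A *\<^sub>v col Q 0 = e \<cdot>\<^sub>v col Q 0"
  defines "A' \<equiv> transpose_mat Q * A * Q"
  shows "A' = four_block_mat (e \<cdot>\<^sub>m 1\<^sub>m 1) (0\<^sub>m 1 m) (0\<^sub>m m 1)
    (mat m m (\<lambda>(i, j). A' $$ (Suc i, Suc j)))" (is "_ = ?B")
proof -
  have A': "A' \<in> carrier_mat (Suc m) (Suc m)" unfolding A'_def using A Q by auto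
  have A'_sym: "transpose_mat A' = A'"
    unfolding A'_def by (rule symmetric_congruence_mat[OF A Q sym])
  have first_col: "A' $$ (i, 0) = (if i = 0 then e else 0)" if i: "i < Suc m" for i
  proof -
    have "A' $$ (i, 0) = col Q i \<bullet> (A *\<^sub>v col Q 0)"
      unfolding A'_def using Q A i by (intro index_congruence_mat) auto
    also have "\<dots> = e * (transpose_mat Q * Q) $$ (i, 0)"
      unfolding eigen using Q i by simp
    finally show ?thesis using i by (simp add: orth)
  qed
  show ?thesis
  proof (rule eq_matI)
    fix i j assume "i < dim_row ?B" "j < dim_col ?B"
    then have i: "i < Suc m" and j: "j < Suc m" by auto
    consider "j = 0" | "i = 0" "j \<noteq> 0" | "i \<noteq> 0" "j \<noteq> 0" by blast
    then show "A' $$ (i, j) = ?B $$ (i, j)"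
    proof cases
      case 1
      then show ?thesis using first_col[OF i] i by auto
    next
      case 2
      then show ?thesis
        using first_col[OF j] symmetric_mat_index[OF A' A'_sym i j] j by auto
    next
      case 3
      then show ?thesis using i j by auto
    qed
  qed (use A' in auto)
qed

lemma orthogonal_congruence_extend_block:
  fixes A Q1 A3 Q3 :: "'a :: comm_ring_1 mat"
  assumes A: "A \<in> carrier_mat (Suc m) (Suc m)" and Q1: "Q1 \<in> carrier_mat (Suc m) (Suc m)"
    and Q1_orth: "transpose_mat Q1 * Q1 = 1\<^sub>m (Suc m)"
    and block: "transpose_mat Q1 * A * Q1 = four_block_mat (e \<cdot>\<^sub>m 1\<^sub>m 1) (0\<^sub>m 1 m) (0\<^sub>m m 1) A3"
    and A3: "A3 \<in> carrier_mat m m" and Q3: "Q3 \<in> carrier_mat m m"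
    and Q3_orth: "transpose_mat Q3 * Q3 = 1\<^sub>m m" and Q3_diag: "transpose_mat Q3 * A3 * Q3 = mat_diag m d"
  defines "Q \<equiv> Q1 * four_block_mat (1\<^sub>m 1) (0\<^sub>m 1 m) (0\<^sub>m m 1) Q3"
  shows "Q \<in> carrier_mat (Suc m) (Suc m)" and "transpose_mat Q * Q = 1\<^sub>m (Suc m)"
    and "transpose_mat Q * A * Q = mat_diag (Suc m) (\<lambda>i. if i = 0 then e else d (i - 1))"
proof -
  define B where "B = four_block_mat (1\<^sub>m 1) (0\<^sub>m 1 m) (0\<^sub>m m 1) Q3"
  have B: "B \<in> carrier_mat (Suc m) (Suc m)" unfolding B_def using Q3 by auto
  then show "Q \<in> carrier_mat (Suc m) (Suc m)" unfolding Q_def B_def[symmetric] using Q1 by simp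
  have Bt: "transpose_mat B = four_block_mat (1\<^sub>m 1) (0\<^sub>m 1 m) (0\<^sub>m m 1) (transpose_mat Q3)"
    unfolding B_def using Q3 by (subst transpose_four_block_mat) auto
  have "transpose_mat Q * Q = transpose_mat Q * 1\<^sub>m (Suc m) * Q"
    unfolding Q_def B_def[symmetric] using Q1 B by simp
  also have "\<dots> = transpose_mat B * (transpose_mat Q1 * 1\<^sub>m (Suc m) * Q1) * B"
    unfolding Q_def B_def[symmetric] using Q1 B by (intro congruence_transpose_mult) auto
  also have "\<dots> = transpose_mat B * B"
    using Q1 B Q1_orth by simp
  also have "\<dots> = 1\<^sub>m (Suc m)"
    unfolding Bt using Q3 by (simp add: B_def mult_four_block_mat_diag Q3_orth)
  finally show "transpose_mat Q * Q = 1\<^sub>m (Suc m)" .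
  have "transpose_mat Q * A * Q = transpose_mat B * (transpose_mat Q1 * A * Q1) * B"
    unfolding Q_def B_def[symmetric] using A Q1 B by (rule congruence_transpose_mult)
  also have "\<dots> = four_block_mat (e \<cdot>\<^sub>m 1\<^sub>m 1) (0\<^sub>m 1 m) (0\<^sub>m m 1) (mat_diag m d)"
    unfolding Bt block Q3_diag[symmetric] using Q3 A3
    by (simp add: B_def mult_four_block_mat_diag)
  also have "\<dots> = mat_diag (Suc m) (\<lambda>i. if i = 0 then e else d (i - 1))"
    by (rule eq_matI) (simp add: mat_diag_def, linarith, auto simp: mat_diag_def)
  finally show "transpose_mat Q * A * Q = mat_diag (Suc m) (\<lambda>i. if i = 0 then e else d (i - 1))" .
qed

theorem real_symmetric_mat_orthogonally_diagonalizable: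
  fixes A :: "real mat"
  assumes "A \<in> carrier_mat n n" "transpose_mat A = A"
  shows "\<exists>Q d. Q \<in> carrier_mat n n \<and> transpose_mat Q * Q = 1\<^sub>m n
    \<and> transpose_mat Q * A * Q = mat_diag n d"
  using assms
proof (induction n arbitrary: A)
  case 0
  then show ?case by (intro exI[of _ "1\<^sub>m 0"]) (auto simp: mat_diag_def intro!: eq_matI)
next
  case (Suc m A)
  have A: "A \<in> carrier_mat (Suc m) (Suc m)" and sym: "transpose_mat A = A" by fact+
  obtain e where "eigenvalue A e"
    using real_symmetric_mat_has_eigenvalue[OF A _ sym] by auto
  then obtain v where v: "v \<in> carrier_vec (Suc m)" "v \<noteq> 0\<^sub>v (Suc m)"
    and Av: "A *\<^sub>v v = e \<cdot>\<^sub>v v"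
    using A unfolding eigenvalue_def eigenvector_def by auto
  obtain Q1 where Q1: "Q1 \<in> carrier_mat (Suc m) (Suc m)"
    and Q1_orth: "transpose_mat Q1 * Q1 = 1\<^sub>m (Suc m)"
    and Q1_col: "col Q1 0 = (1 / sqrt (v \<bullet> v)) \<cdot>\<^sub>v v"
    using orthogonal_mat_with_first_col[OF v] .
  have "A *\<^sub>v col Q1 0 = e \<cdot>\<^sub>v col Q1 0"
    unfolding Q1_col using A v Av by (simp add: mult_mat_vec smult_smult_assoc mult.commute)
  define A' where "A' = transpose_mat Q1 * A * Q1"
  define A3 where "A3 = mat m m (\<lambda>(i, j). A' $$ (Suc i, Suc j))"
  have block: "A' = four_block_mat (e \<cdot>\<^sub>m 1\<^sub>m 1) (0\<^sub>m 1 m) (0\<^sub>m m 1) A3"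
    unfolding A3_def A'_def by (rule orthogonal_congruence_deflates_eigenvector) fact+
  have A': "A' \<in> carrier_mat (Suc m) (Suc m)" unfolding A'_def using A Q1 by auto
  have "transpose_mat A' = A'"
    unfolding A'_def by (rule symmetric_congruence_mat[OF A Q1 sym])
  then have "transpose_mat A3 = A3"
    by (intro eq_matI) (auto simp: A3_def symmetric_mat_index[OF A'])
  then obtain Q3 d where "Q3 \<in> carrier_mat m m" "transpose_mat Q3 * Q3 = 1\<^sub>m m"
    "transpose_mat Q3 * A3 * Q3 = mat_diag m d"
    using Suc.IH[of A3] by (auto simp: A3_def)
  moreover have "A3 \<in> carrier_mat m m" unfolding A3_def by simp
  ultimately show ?case
    using orthogonal_congruence_extend_block[OF A Q1 Q1_orth block[unfolded A'_def]] by blast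
qed

section \<open>Counting eigenvalues\<close>

lemma order_prod_linear_factors:
  fixes c :: "'a :: idom"
  shows "Polynomial.order c (\<Prod>a\<leftarrow>ds. [:- a, 1:]) = count_list ds c"
proof (induction ds)
  case Nil
  then show ?case by (simp add: order_0I)
next
  case (Cons a ds)
  have "monic (\<Prod>a\<leftarrow>ds. [:- a, 1:])" by (rule monic_prod_list) auto
  then have "(\<Prod>a\<leftarrow>ds. [:- a, 1:]) \<noteq> 0" by auto
  then have "[:- a, 1:] * (\<Prod>a\<leftarrow>ds. [:- a, 1:]) \<noteq> 0"
    by (metis mult_eq_0_iff pCons_eq_0_iff one_neq_zero)
  then have "Polynomial.order c ([:- a, 1:] * (\<Prod>a\<leftarrow>ds. [:- a, 1:]))
      = Polynomial.order c [:- a, 1:] + Polynomial.order c (\<Prod>a\<leftarrow>ds. [:- a, 1:])"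
    by (rule order_mult)
  then show ?case using Cons by (auto simp: order_linear')
qed

lemma sum_count_list_eq_length_filter:
  assumes "finite S"
  shows "(\<Sum>c\<in>S. count_list xs c) = length (filter (\<lambda>x. x \<in> S) xs)"
proof (induction xs)
  case (Cons a xs)
  have "(\<Sum>c\<in>S. count_list (a # xs) c)
      = (\<Sum>c\<in>S. count_list xs c) + (\<Sum>c\<in>S. if a = c then 1 else 0)"
    unfolding sum.distrib[symmetric] by (intro sum.cong) auto
  then show ?case using Cons assms by simp
qed simp

lemma sum_order_roots_prod_linear_factors:
  fixes d :: "nat \<Rightarrow> 'a :: idom" and n :: nat
  defines "p \<equiv> \<Prod>a\<leftarrow>map d [0..<n]. [:- a, 1:]"
  shows "(\<Sum>c\<in>{c. poly p c = 0 \<and> P c}. Polynomial.order c p) = card {i. i < n \<and> P (d i)}"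
proof -
  have roots: "{c. poly p c = 0 \<and> P c} = {c \<in> set (map d [0..<n]). P c}"
    unfolding p_def by (auto simp: poly_prod_list_zero_iff)
  have "(\<Sum>c\<in>{c \<in> set (map d [0..<n]). P c}. count_list (map d [0..<n]) c)
      = length (filter P (map d [0..<n]))"
    by (subst sum_count_list_eq_length_filter) (auto intro!: arg_cong[where f = length] filter_cong)
  also have "\<dots> = card {i. i < n \<and> P (d i)}"
    by (simp add: length_filter_conv_card) (intro arg_cong[where f = card], auto)
  finally show ?thesis unfolding roots unfolding p_def order_prod_linear_factors .
qed

lemma char_poly_orthogonally_diagonalized:
  fixes A Q :: "'a :: field mat"
  assumes A: "A \<in> carrier_mat n n" and Q: "Q \<in> carrier_mat n n"
    and orth: "transpose_mat Q * Q = 1\<^sub>m n" and diag: "transpose_mat Q * A * Q = mat_diag n d"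
  shows "char_poly A = (\<Prod>a\<leftarrow>map d [0..<n]. [:- a, 1:])"
proof -
  have Qt: "transpose_mat Q \<in> carrier_mat n n" using Q by simp
  have orth': "Q * transpose_mat Q = 1\<^sub>m n" by (rule mat_mult_left_right_inverse[OF Qt Q orth])
  have "Q * mat_diag n d * transpose_mat Q = (Q * transpose_mat Q) * A * (Q * transpose_mat Q)"
    unfolding diag[symmetric] using A Q by (simp add: assoc_mult_mat[of _ n n _ n _ n])
  then have "similar_mat A (mat_diag n d)"
    unfolding similar_mat_def using A Q orth orth'
    by (intro exI[of _ Q] exI[of _ "transpose_mat Q"] similar_mat_witI[of _ _ n]) auto
  then have "char_poly A = char_poly (mat_diag n d)" by (rule char_poly_similar)
  also have "\<dots> = (\<Prod>a\<leftarrow>map d [0..<n]. [:- a, 1:])"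
    using char_poly_upper_triangular[OF mat_diag_dim upper_triangular_mat_diag] by simp
  finally show ?thesis .
qed

lemma
  fixes A Q :: "real mat"
  assumes "A \<in> carrier_mat n n" "Q \<in> carrier_mat n n"
    "transpose_mat Q * Q = 1\<^sub>m n" "transpose_mat Q * A * Q = mat_diag n d"
  shows pos_eigs_orthogonally_diagonalized: "pos_eigs A = card {i. i < n \<and> d i > 0}"
    and neg_eigs_orthogonally_diagonalized: "neg_eigs A = card {i. i < n \<and> d i < 0}"
proof -
  note char_poly = char_poly_orthogonally_diagonalized[OF assms]
  have eigenvalue: "eigenvalue A c \<longleftrightarrow> poly (\<Prod>a\<leftarrow>map d [0..<n]. [:- a, 1:]) c = 0" for c
    using eigenvalue_root_char_poly[OF assms(1)] char_poly by simp
  show "pos_eigs A = card {i. i < n \<and> d i > 0}" "neg_eigs A = card {i. i < n \<and> d i < 0}"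
    unfolding pos_eigs_def neg_eigs_def eigenvalue char_poly
    by (rule sum_order_roots_prod_linear_factors)+
qed

section \<open>Sylvester's law of inertia\<close>

lemma exists_nonzero_vec_orthogonal:
  fixes rs :: "'a :: idom vec list"
  assumes rs: "set rs \<subseteq> carrier_vec n" and len: "length rs < n"
  obtains c where "c \<in> carrier_vec n" "c \<noteq> 0\<^sub>v n" "\<forall>r\<in>set rs. r \<bullet> c = 0"
proof -
  define f where "f i = (if i < length rs then rs ! i else 0\<^sub>v n)" for i
  define M where "M = mat\<^sub>r n n (\<lambda>i. if i = n - 1 then 0\<^sub>v n else f i)"
  have f: "f \<in> {0..<n} \<rightarrow> carrier_vec n"
    unfolding f_def using rs nth_mem by fastforce
  have M: "M \<in> carrier_mat n n" unfolding M_def by auto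
  have "det M = 0" unfolding M_def using len by (intro det_row_0[OF _ f]) auto
  then obtain c where c: "c \<in> carrier_vec n" "c \<noteq> 0\<^sub>v n" "M *\<^sub>v c = 0\<^sub>v n"
    using det_0_iff_vec_prod_zero[OF M] by auto
  have "r \<bullet> c = 0" if "r \<in> set rs" for r
  proof -
    obtain i where i: "i < length rs" and r: "r = rs ! i"
      using \<open>r \<in> set rs\<close> by (auto simp: in_set_conv_nth)
    have "r \<in> carrier_vec n" using rs \<open>r \<in> set rs\<close> by auto
    then have "row M i = r" unfolding M_def f_def r using i len by auto
    then show "r \<bullet> c = 0" using arg_cong[OF c(3), of "\<lambda>v. v $ i"] M i len by auto
  qed
  then show thesis using that c by blast
qed

lemma length_filter_upt: "length (filter P [0..<n]) = card {i. i < n \<and> P i}"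
  by (simp add: length_filter_conv_card) (intro arg_cong[where f = card], auto)

lemma exists_nonzero_vec_vanishing:
  fixes M :: "'a :: idom mat"
  assumes M: "M \<in> carrier_mat n n" and I: "I \<subseteq> {..<n}" and J: "J \<subseteq> {..<n}"
    and less: "card J < card I"
  obtains c where "c \<in> carrier_vec n" "c \<noteq> 0\<^sub>v n"
    "\<And>i. i < n \<Longrightarrow> i \<notin> I \<Longrightarrow> c $ i = 0" "\<And>j. j \<in> J \<Longrightarrow> (M *\<^sub>v c) $ j = 0"
proof -
  define rs where "rs = map (row M) (sorted_list_of_set J)
    @ map (unit_vec n) (filter (\<lambda>i. i \<notin> I) [0..<n])"
  have "finite I" "finite J" using I J finite_subset by blast+
  have "card {i. i < n \<and> i \<notin> I} = card ({..<n} - I)"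
    by (intro arg_cong[where f = card]) auto
  also have "\<dots> = n - card I"
    using I \<open>finite I\<close> by (simp add: card_Diff_subset)
  finally have "length rs = card J + (n - card I)"
    using \<open>finite J\<close> by (simp add: rs_def length_filter_upt)
  moreover have "card I \<le> n" using card_mono[OF _ I] by simp
  ultimately have "length rs < n" using less by linarith
  moreover have "set rs \<subseteq> carrier_vec n" unfolding rs_def using M by auto
  ultimately obtain c where c: "c \<in> carrier_vec n" "c \<noteq> 0\<^sub>v n"
    and orth: "\<forall>r\<in>set rs. r \<bullet> c = 0"
    using exists_nonzero_vec_orthogonal by blast
  show thesis
  proof (rule that[OF c])
    fix i assume "i < n" "i \<notin> I"
    then have "unit_vec n i \<in> set rs" unfolding rs_def by auto
    then show "c $ i = 0" using orth scalar_prod_left_unit[OF c(1) \<open>i < n\<close>] by auto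
  next
    fix j assume "j \<in> J"
    then have "row M j \<in> set rs" unfolding rs_def using \<open>finite J\<close> by auto
    then show "(M *\<^sub>v c) $ j = 0" using orth \<open>j \<in> J\<close> J M by auto
  qed
qed

lemma card_pos_le_of_congruent_mat_diag:
  fixes M :: "real mat" and d s :: "nat \<Rightarrow> real"
  assumes M: "M \<in> carrier_mat n n"
    and congruent: "mat_diag n d = transpose_mat M * mat_diag n s * M"
  shows "card {i. i < n \<and> d i > 0} \<le> card {j. j < n \<and> s j > 0}"
proof (rule ccontr)
  assume more_pos: "\<not> ?thesis"
  obtain c where c: "c \<in> carrier_vec n" "c \<noteq> 0\<^sub>v n"
    and c_supp: "\<And>i. i < n \<Longrightarrow> i \<notin> {i. i < n \<and> d i > 0} \<Longrightarrow> c $ i = 0"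
    and Mc_supp: "\<And>j. j \<in> {j. j < n \<and> s j > 0} \<Longrightarrow> (M *\<^sub>v c) $ j = 0"
    by (rule exists_nonzero_vec_vanishing[OF M, of "{i. i < n \<and> d i > 0}" "{j. j < n \<and> s j > 0}"])
      (use more_pos in auto)
  obtain i where i: "i < n" "c $ i \<noteq> 0"
    using c by (metis eq_vecI carrier_vecD index_zero_vec)
  with c_supp have "d i > 0" by blast
  have "0 < (\<Sum>i<n. d i * (c $ i)\<^sup>2)"
  proof (rule sum_pos2[of _ i])
    show "0 < d i * (c $ i)\<^sup>2" using \<open>d i > 0\<close> i by simp
    show "0 \<le> d j * (c $ j)\<^sup>2" if "j \<in> {..<n}" for j
      using c_supp[of j] that by (cases "d j > 0") auto
  qed (use i in auto)
  also have "\<dots> = c \<bullet> (mat_diag n d *\<^sub>v c)"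
    by (rule quadratic_form_mat_diag[OF c(1), symmetric])
  also have "\<dots> = (M *\<^sub>v c) \<bullet> (mat_diag n s *\<^sub>v (M *\<^sub>v c))"
    unfolding congruent using M c by (intro quadratic_form_congruence) auto
  also have "\<dots> = (\<Sum>j<n. s j * ((M *\<^sub>v c) $ j)\<^sup>2)"
    using M c by (intro quadratic_form_mat_diag) auto
  also have "\<dots> \<le> 0"
  proof (rule sum_nonpos)
    show "s j * ((M *\<^sub>v c) $ j)\<^sup>2 \<le> 0" if "j \<in> {..<n}" for j
      using Mc_supp[of j] that by (cases "s j > 0") (auto simp: mult_nonpos_nonneg)
  qed
  finally show False by simp
qed

lemma card_pos_add_card_neg:
  fixes f :: "nat \<Rightarrow> real"
  assumes "\<forall>i<n. f i \<noteq> 0"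
  shows "card {i. i < n \<and> f i > 0} + card {i. i < n \<and> f i < 0} = n"
proof -
  have "{i. i < n \<and> f i > 0} \<union> {i. i < n \<and> f i < 0} = {..<n}" using assms by force
  moreover have "{i. i < n \<and> f i > 0} \<inter> {i. i < n \<and> f i < 0} = {}" by auto
  ultimately show ?thesis by (metis card_Un_disjoint card_lessThan finite_Un finite_lessThan)
qed

theorem sylvester_law_of_inertia:
  fixes M :: "real mat" and d s :: "nat \<Rightarrow> real"
  assumes M: "M \<in> carrier_mat n n" and "det M \<noteq> 0" and s: "\<forall>j<n. s j \<noteq> 0"
    and congruent: "mat_diag n d = transpose_mat M * mat_diag n s * M"
  shows "card {i. i < n \<and> d i > 0} = card {j. j < n \<and> s j > 0}"
    and "card {i. i < n \<and> d i < 0} = card {j. j < n \<and> s j < 0}"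
proof -
  have "det (mat_diag n d) = det M * det (mat_diag n s) * det M"
    unfolding congruent using M by (simp add: det_mult[of _ n] det_transpose)
  moreover have "det (mat_diag n s) \<noteq> 0"
    using s by (auto simp: det_mat_diag)
  ultimately have "det (mat_diag n d) \<noteq> 0" using \<open>det M \<noteq> 0\<close> by simp
  then have d: "\<forall>i<n. d i \<noteq> 0" by (auto simp: det_mat_diag)
  have "mat_diag n (\<lambda>i. - d i) = (- 1) \<cdot>\<^sub>m mat_diag n d"
    by (auto simp: mat_diag_def intro!: eq_matI)
  also have "\<dots> = transpose_mat M * ((- 1) \<cdot>\<^sub>m mat_diag n s) * M"
    unfolding congruent using M
      mult_smult_distrib[of "transpose_mat M" n n "mat_diag n s" n "- 1"]
      mult_smult_assoc_mat[of "transpose_mat M * mat_diag n s" n n M n "- 1"]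
    by simp
  also have "(- 1) \<cdot>\<^sub>m mat_diag n s = mat_diag n (\<lambda>j. - s j)"
    by (auto simp: mat_diag_def intro!: eq_matI)
  finally have "card {i. i < n \<and> - d i > 0} \<le> card {j. j < n \<and> - s j > 0}"
    by (rule card_pos_le_of_congruent_mat_diag[OF M])
  moreover have "card {i. i < n \<and> d i > 0} \<le> card {j. j < n \<and> s j > 0}"
    by (rule card_pos_le_of_congruent_mat_diag[OF M congruent])
  ultimately show "card {i. i < n \<and> d i > 0} = card {j. j < n \<and> s j > 0}"
    and "card {i. i < n \<and> d i < 0} = card {j. j < n \<and> s j < 0}"
    using card_pos_add_card_neg[OF d] card_pos_add_card_neg[OF s] by simp_all
qed

lemma
  fixes W :: "real mat"
  assumes W: "W \<in> carrier_mat n n" and "det W \<noteq> 0" and s: "\<forall>j<n. s j \<noteq> 0"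
  shows pos_eigs_congruent_mat_diag:
      "pos_eigs (transpose_mat W * mat_diag n s * W) = card {j. j < n \<and> s j > 0}"
    and neg_eigs_congruent_mat_diag:
      "neg_eigs (transpose_mat W * mat_diag n s * W) = card {j. j < n \<and> s j < 0}"
proof -
  let ?A = "transpose_mat W * mat_diag n s * W"
  have A: "?A \<in> carrier_mat n n" using W by auto
  have "transpose_mat ?A = ?A" using W by (intro symmetric_congruence_mat) auto
  then obtain Q d where Q: "Q \<in> carrier_mat n n" and orth: "transpose_mat Q * Q = 1\<^sub>m n"
    and diag: "transpose_mat Q * ?A * Q = mat_diag n d"
    using real_symmetric_mat_orthogonally_diagonalizable[OF A] by blast
  have "mat_diag n d = transpose_mat (W * Q) * mat_diag n s * (W * Q)"
    unfolding diag[symmetric] using W Q by (intro congruence_transpose_mult[symmetric]) auto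
  moreover have "det (W * Q) \<noteq> 0"
    using det_mult[OF W Q] \<open>det W \<noteq> 0\<close> det_orthogonal_mat_nonzero[OF Q orth] by simp
  moreover have "W * Q \<in> carrier_mat n n" using W Q by simp
  ultimately have "card {i. i < n \<and> d i > 0} = card {j. j < n \<and> s j > 0}"
    "card {i. i < n \<and> d i < 0} = card {j. j < n \<and> s j < 0}"
    using sylvester_law_of_inertia s by blast+
  then show "pos_eigs ?A = card {j. j < n \<and> s j > 0}" "neg_eigs ?A = card {j. j < n \<and> s j < 0}"
    using pos_eigs_orthogonally_diagonalized[OF A Q orth diag]
      neg_eigs_orthogonally_diagonalized[OF A Q orth diag] by simp_all
qed

section \<open>The connection matrix\<close>

lemma
  assumes "simplicial_complex G"
  shows distinct_simplex_list: "distinct (simplex_list G)"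
    and set_simplex_list: "set (simplex_list G) = G"
proof -
  have "finite G" using assms unfolding simplicial_complex_def by auto
  then have "\<exists>xs. distinct xs \<and> set xs = G" using finite_distinct_list by blast
  then have "distinct (simplex_list G) \<and> set (simplex_list G) = G"
    unfolding simplex_list_def by (rule someI_ex)
  then show "distinct (simplex_list G)" "set (simplex_list G) = G" by auto
qed

lemma connection_matrix_carrier:
  "connection_matrix G \<in> carrier_mat (length (simplex_list G)) (length (simplex_list G))"
  unfolding connection_matrix_def Let_def by (rule mat_carrier)

lemma sum_minus_one_power_card_Pow:
  assumes "finite T"
  shows "(\<Sum>z\<in>Pow T. (- 1 :: 'a :: comm_ring_1) ^ card z) = (if T = {} then 1 else 0)"
  using prod_diff_conv_sum[OF assms, of "\<lambda>_. 1" "\<lambda>_. 1", symmetric] assms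
  by (simp add: power_0_left)

lemma sum_sign_faces_inter:
  assumes G: "simplicial_complex G" and x: "x \<in> G"
  shows "(\<Sum>z\<in>{z \<in> G. z \<subseteq> x \<inter> y}. (- 1 :: real) ^ sdim z) = (if x \<inter> y = {} then 0 else 1)"
proof -
  define T where "T = x \<inter> y"
  from G x have "finite x" and nonempty: "\<And>z. z \<in> G \<Longrightarrow> z \<noteq> {}"
    and closed: "\<And>z. z \<subseteq> x \<Longrightarrow> z \<noteq> {} \<Longrightarrow> z \<in> G"
    unfolding simplicial_complex_def by blast+
  then have T: "finite T" unfolding T_def by simp
  have "{z \<in> G. z \<subseteq> T} = Pow T - {{}}"
    using nonempty closed unfolding T_def by auto
  moreover have "(- 1 :: real) ^ sdim z = - ((- 1) ^ card z)" if "z \<in> Pow T - {{}}" for z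
  proof -
    have "card z \<noteq> 0" using that T by (auto simp: finite_subset)
    then show ?thesis unfolding sdim_def by (cases "card z") auto
  qed
  ultimately have "(\<Sum>z\<in>{z \<in> G. z \<subseteq> T}. (- 1 :: real) ^ sdim z)
      = - ((\<Sum>z\<in>Pow T. (- 1) ^ card z) - 1)"
    using T by (simp add: sum.remove[of "Pow T" "{}"] sum_negf)
  also have "\<dots> = (if T = {} then 0 else 1)"
    unfolding sum_minus_one_power_card_Pow[OF T] by simp
  finally show ?thesis unfolding T_def .
qed

definition face_incidence_mat :: "'a set list \<Rightarrow> real mat" where
  "face_incidence_mat xs =
    mat (length xs) (length xs) (\<lambda>(i, j). if xs ! i \<subseteq> xs ! j then 1 else 0)"

lemma face_incidence_mat_dim [simp]:
  "dim_row (face_incidence_mat xs) = length xs" "dim_col (face_incidence_mat xs) = length xs"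
  by (simp_all add: face_incidence_mat_def)

lemma face_incidence_mat_carrier [simp]:
  "face_incidence_mat xs \<in> carrier_mat (length xs) (length xs)"
  by (simp add: carrier_matI)

lemma connection_matrix_congruence:
  assumes G: "simplicial_complex G"
  defines "xs \<equiv> simplex_list G"
  shows "connection_matrix G = transpose_mat (face_incidence_mat xs)
    * mat_diag (length xs) (\<lambda>k. (- 1) ^ sdim (xs ! k)) * face_incidence_mat xs"
    (is "_ = ?C")
proof (rule eq_matI)
  let ?N = "length xs" and ?W = "face_incidence_mat xs"
  have distinct: "distinct xs" and set: "set xs = G"
    unfolding xs_def using G by (simp_all add: distinct_simplex_list set_simplex_list)
  fix i j assume "i < dim_row ?C" "j < dim_col ?C"
  then have i: "i < ?N" and j: "j < ?N" by auto
  let ?f = "\<lambda>z. if z \<subseteq> xs ! i \<inter> xs ! j then (- 1 :: real) ^ sdim z else 0"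
  have "?C $$ (i, j) = (\<Sum>k<?N. ?W $$ (k, i) * (- 1) ^ sdim (xs ! k) * ?W $$ (k, j))"
    by (rule index_congruence_mat_diag[OF face_incidence_mat_carrier i j])
  also have "\<dots> = (\<Sum>k<?N. ?f (xs ! k))"
    using i j by (intro sum.cong) (auto simp: face_incidence_mat_def)
  also have "\<dots> = (\<Sum>z\<in>G. ?f z)"
    unfolding set[symmetric] using distinct by (intro sum.reindex_bij_betw bij_betw_nth) auto
  also have "\<dots> = (\<Sum>z\<in>{z \<in> G. z \<subseteq> xs ! i \<inter> xs ! j}. (- 1) ^ sdim z)"
    using G unfolding simplicial_complex_def by (simp add: sum.inter_filter)
  also have "\<dots> = connection_matrix G $$ (i, j)"
    using sum_sign_faces_inter[OF G nth_mem[OF i, unfolded set], of "xs ! j"] i j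
    by (simp add: connection_matrix_def xs_def[symmetric])
  finally show "connection_matrix G $$ (i, j) = ?C $$ (i, j)" by (rule sym)
qed (use connection_matrix_carrier[of G] in \<open>simp_all add: xs_def\<close>)

lemma face_incidence_mat_mult_vec_index:
  assumes distinct: "distinct xs" and finite: "\<forall>x\<in>set xs. finite x"
    and v: "v \<in> carrier_vec (length xs)" and i: "i < length xs"
    and largest: "\<And>j. j < length xs \<Longrightarrow> v $ j \<noteq> 0 \<Longrightarrow> card (xs ! j) \<le> card (xs ! i)"
  shows "(face_incidence_mat xs *\<^sub>v v) $ i = v $ i"
proof -
  have "(face_incidence_mat xs *\<^sub>v v) $ i
      = (\<Sum>j<length xs. (if xs ! i \<subseteq> xs ! j then 1 else 0) * v $ j)"
    using v i by (auto simp: face_incidence_mat_def scalar_prod_def lessThan_atLeast0 intro!: sum.cong)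
  also have "\<dots> = (\<Sum>j<length xs. if j = i then v $ i else 0)"
  proof (rule sum.cong)
    fix j assume j: "j \<in> {..<length xs}"
    show "(if xs ! i \<subseteq> xs ! j then 1 else 0) * v $ j = (if j = i then v $ i else 0)"
    proof (cases "j \<noteq> i \<and> xs ! i \<subseteq> xs ! j \<and> v $ j \<noteq> 0")
      case True
      then have "card (xs ! j) \<le> card (xs ! i)" using j largest by simp
      moreover have "finite (xs ! j)" using finite j by simp
      ultimately have "xs ! i = xs ! j" using True card_seteq by blast
      with True show ?thesis using distinct i j by (simp add: nth_eq_iff_index_eq)
    qed auto
  qed simp
  also have "\<dots> = v $ i" using i by simp
  finally show ?thesis .
qed

lemma det_face_incidence_mat_nonzero:
  assumes distinct: "distinct xs" and finite: "\<forall>x\<in>set xs. finite x"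
  shows "det (face_incidence_mat xs) \<noteq> 0"
proof
  assume "det (face_incidence_mat xs) = 0"
  then obtain v where v: "v \<in> carrier_vec (length xs)" "v \<noteq> 0\<^sub>v (length xs)"
    and Wv: "face_incidence_mat xs *\<^sub>v v = 0\<^sub>v (length xs)"
    using det_0_iff_vec_prod_zero[OF face_incidence_mat_carrier] by auto
  define I where "I = {i. i < length xs \<and> v $ i \<noteq> 0}"
  obtain i0 where "i0 < length xs" "v $ i0 \<noteq> 0"
    using v by (metis eq_vecI carrier_vecD index_zero_vec)
  then have "(\<lambda>i. card (xs ! i)) ` I \<noteq> {}" unfolding I_def by blast
  then have "Max ((\<lambda>i. card (xs ! i)) ` I) \<in> (\<lambda>i. card (xs ! i)) ` I"
    unfolding I_def by (intro Max_in) auto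
  then obtain i where "i \<in> I" and i_max: "card (xs ! i) = Max ((\<lambda>i. card (xs ! i)) ` I)" by auto
  have largest: "card (xs ! j) \<le> card (xs ! i)" if "j \<in> I" for j
    unfolding i_max using that by (simp add: I_def)
  have "(face_incidence_mat xs *\<^sub>v v) $ i = v $ i"
    using \<open>i \<in> I\<close> largest unfolding I_def
    by (intro face_incidence_mat_mult_vec_index[OF distinct finite v(1)]) auto
  then show False using Wv \<open>i \<in> I\<close> unfolding I_def by simp
qed

lemma
  assumes "distinct xs"
  shows card_nth_sign_pos:
      "card {k. k < length xs \<and> (- 1 :: real) ^ sdim (xs ! k) > 0} = card {x \<in> set xs. even (sdim x)}"
    and card_nth_sign_neg:
      "card {k. k < length xs \<and> (- 1 :: real) ^ sdim (xs ! k) < 0} = card {x \<in> set xs. odd (sdim x)}"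
proof -
  have card_nth: "card {k. k < length xs \<and> P (xs ! k)} = card {x \<in> set xs. P x}" for P
  proof -
    have "bij_betw (nth xs) {k. k < length xs \<and> P (xs ! k)} {x \<in> set xs. P x}"
      using assms by (auto simp: bij_betw_def inj_on_def nth_eq_iff_index_eq in_set_conv_nth)
    then show ?thesis by (rule bij_betw_same_card)
  qed
  show "card {k. k < length xs \<and> (- 1 :: real) ^ sdim (xs ! k) > 0} = card {x \<in> set xs. even (sdim x)}"
    unfolding card_nth[symmetric] by (intro arg_cong[where f = card]) (auto simp: minus_one_power_iff)
  show "card {k. k < length xs \<and> (- 1 :: real) ^ sdim (xs ! k) < 0} = card {x \<in> set xs. odd (sdim x)}"
    unfolding card_nth[symmetric] by (intro arg_cong[where f = card]) (auto simp: minus_one_power_iff)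
qed

lemma euler_char_eq_card_even_minus_card_odd:
  assumes "finite G"
  shows "euler_char G = int (card {x \<in> G. even (sdim x)}) - int (card {x \<in> G. odd (sdim x)})"
proof -
  have "euler_char G = (\<Sum>x\<in>G. if even (sdim x) then 1 else - 1)"
    unfolding euler_char_def by (intro sum.cong) auto
  also have "\<dots> = int (card (G \<inter> {x. even (sdim x)})) - int (card (G \<inter> - {x. even (sdim x)}))"
    using assms by (simp add: sum.If_cases sum_negf)
  also have "G \<inter> {x. even (sdim x)} = {x \<in> G. even (sdim x)}" by auto
  also have "G \<inter> - {x. even (sdim x)} = {x \<in> G. odd (sdim x)}" by auto
  finally show ?thesis .
qed

theorem theorem3:
  fixes G :: "'a set set"
  assumes "simplicial_complex G"
  shows "card {x\<in>G. even (sdim x)} = pos_eigs (connection_matrix G)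
       \<and> card {x\<in>G. odd (sdim x)} = neg_eigs (connection_matrix G)
       \<and> euler_char G = int (pos_eigs (connection_matrix G)) - int (neg_eigs (connection_matrix G))"
proof -
  define xs where "xs = simplex_list G"
  have distinct: "distinct xs" and set: "set xs = G"
    unfolding xs_def using assms by (simp_all add: distinct_simplex_list set_simplex_list)
  have "\<forall>x\<in>set xs. finite x" using assms set unfolding simplicial_complex_def by auto
  then have W: "det (face_incidence_mat xs) \<noteq> 0"
    by (rule det_face_incidence_mat_nonzero[OF distinct])
  have signs: "\<forall>k<length xs. (- 1 :: real) ^ sdim (xs ! k) \<noteq> 0" by simp
  note L = connection_matrix_congruence[OF assms, folded xs_def]
  have "pos_eigs (connection_matrix G) = card {x \<in> G. even (sdim x)}"
    unfolding L pos_eigs_congruent_mat_diag[OF face_incidence_mat_carrier W signs]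
    using card_nth_sign_pos[OF distinct] set by simp
  moreover have "neg_eigs (connection_matrix G) = card {x \<in> G. odd (sdim x)}"
    unfolding L neg_eigs_congruent_mat_diag[OF face_incidence_mat_carrier W signs]
    using card_nth_sign_neg[OF distinct] set by simp
  moreover have "finite G" using assms unfolding simplicial_complex_def by simp
  ultimately show ?thesis by (simp add: euler_char_eq_card_even_minus_card_odd)
qed

end
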